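(* Let $G$ be a $B_2$-EPG graph given with a representation, let $a,b$ be two rows, and let $Y$ be a set of vertices all with index exactly $\{a,b\}$. Suppose the projection graph of $Y$ on $a$ is not a clique. Then there is a proper typed interval $t$ on row $a$ such that: (1) every vertex of $Y$ intersects $t$; (2) for every vertex $u$ whose index is $\{a\}$ or $\{a,c\}$ with $c\neq a,b$, $u$ is adjacent to every vertex of $Y$ if and only if $u$ contains $t$.
   Context: A graph $G$ is a $B_k$-EPG graph if each vertex $u$ can be assigned a path $P_u$ in the planar orthogonal grid with at most $k$ bends such that $uv\in E(G)$ iff $P_u$ and $P_v$ share at least one grid edge (a representation); for $B_2$-EPG graphs one assumes w.l.o.g. every path has exactly two bends. A vertex $u$ intersects a row if $P_u$ contains a grid edge of that row; the index of $u$ is the set of rows it intersects. If $a$ is in the index of $u$, $P_u^a$ is the segment of row $a$ between the two points of row $a$ where $P_u$ stops or bends. Types: $\emptyset$, $\mathsf d$, $\mathsf u$. A typed interval on row $a$ is $[x\alpha, y\beta]$ with $\alpha\le\beta$ points of row $a$ and $x,y$ types; it is proper if $\alpha\neq\beta$, or $\alpha=\beta$, $x=y$ and $x\in\{\mathsf u,\mathsf d\}$. For typed intervals $t=[x\alpha,y\beta]$, $t'=[x'\alpha',y'\beta']$ on row $a$ and an endpoint $z\gamma\in\{x'\alpha',y'\beta'\}$ of $t'$, $t$ is coherent with $z\gamma$ if (i) $\gamma\in(\alpha,\beta)$ (open interval), or (ii) $z=\emptyset$ and $[\alpha,\beta]$ contains the grid edge of $[\alpha',\beta']$ incident to $\gamma$,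 or (iii) $z\neq\emptyset$ and $z\gamma\in\{x\alpha,y\beta\}$. $t$ contains $t'$ if $[\alpha',\beta']\subseteq[\alpha,\beta]$ and $t$ is coherent with both endpoints of $t'$. $t$ intersects $t'$ if $[\alpha,\beta]\cap[\alpha',\beta']$ contains a grid edge, or $t$ is coherent with an endpoint of $t'$, or $t'$ is coherent with an endpoint of $t$. The t-projection of $u$ on $a$ is $[x\alpha,y\beta]$ where $\alpha,\beta$ are the endpoints of $P_u^a$ and the type of an endpoint $\gamma$ is $\emptyset$ if $P_u$ ends at $\gamma$, $\mathsf d$ if $P_u$ bends downwards at $\gamma$, $\mathsf u$ if upwards. A vertex contains (intersects) a typed interval $t$ on $a$ if its t-projection on $a$ contains (intersects) $t$. The projection graph of a set $Y$ of vertices whose indices contain $a$ is the graph on $Y$ in which $u,v$ are adjacent iff their t-projections on $a$ intersect. *)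

theory Defs
  imports Main
begin

text \<open>Grid points are pairs (x, y) of integers; row a is the horizontal line y = a.
  A grid edge is either the horizontal unit segment from (x,y) to (x+1,y) (HE x y)
  or the vertical unit segment from (x,y) to (x,y+1) (VE x y).\<close>

type_synonym point = "int \<times> int"

datatype gedge = HE int int | VE int int

definition seg_edges :: "point \<Rightarrow> point \<Rightarrow> gedge set" where
  "seg_edges p q =
     (if snd p = snd q then {HE x (snd p) | x. min (fst p) (fst q) \<le> x \<and> x < max (fst p) (fst q)}
      else if fst p = fst q then {VE (fst p) y | y. min (snd p) (snd q) \<le> y \<and> y < max (snd p) (snd q)}
      else {})"

text \<open>A path with exactly two bends, given by its start point, its two bend points and its
  end point. (For B_2-EPG graphs one assumes w.l.o.g. every path has exactly two bends.)\<close>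

datatype path2 = Path point point point point

definition horiz :: "point \<Rightarrow> point \<Rightarrow> bool" where
  "horiz p q \<longleftrightarrow> snd p = snd q \<and> fst p \<noteq> fst q"

definition vert :: "point \<Rightarrow> point \<Rightarrow> bool" where
  "vert p q \<longleftrightarrow> fst p = fst q \<and> snd p \<noteq> snd q"

fun valid_path :: "path2 \<Rightarrow> bool" where
  "valid_path (Path p0 p1 p2 p3) \<longleftrightarrow>
     (horiz p0 p1 \<and> vert p1 p2 \<and> horiz p2 p3) \<or> (vert p0 p1 \<and> horiz p1 p2 \<and> vert p2 p3)"

fun pedges :: "path2 \<Rightarrow> gedge set" where
  "pedges (Path p0 p1 p2 p3) = seg_edges p0 p1 \<union> seg_edges p1 p2 \<union> seg_edges p2 p3"

definition B2_rep :: "'v set \<Rightarrow> ('v \<Rightarrow> 'v \<Rightarrow> bool) \<Rightarrow> ('v \<Rightarrow> path2) \<Rightarrow> bool" where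
  "B2_rep V adj P \<longleftrightarrow>
     (\<forall>u\<in>V. valid_path (P u)) \<and>
     (\<forall>u\<in>V. \<forall>v\<in>V. adj u v \<longleftrightarrow> u \<noteq> v \<and> pedges (P u) \<inter> pedges (P v) \<noteq> {})"

definition index :: "('v \<Rightarrow> path2) \<Rightarrow> 'v \<Rightarrow> int set" where
  "index P u = {a. \<exists>x. HE x a \<in> pedges (P u)}"

datatype ty = TE | TD | TU   \<comment> \<open>the types \<emptyset>, d, u\<close>

text \<open>A typed interval [x\<alpha>, y\<beta>] on a (fixed) row is represented as ((x,\<alpha>),(y,\<beta>)), where
  \<alpha>, \<beta> are the x-coordinates of points of that row.\<close>

type_synonym tint = "(ty \<times> int) \<times> (ty \<times> int)"

fun typed_interval :: "tint \<Rightarrow> bool" where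
  "typed_interval ((x, \<alpha>), (y, \<beta>)) \<longleftrightarrow> \<alpha> \<le> \<beta>"

fun proper :: "tint \<Rightarrow> bool" where
  "proper ((x, \<alpha>), (y, \<beta>)) \<longleftrightarrow> \<alpha> \<le> \<beta> \<and> (\<alpha> \<noteq> \<beta> \<or> (x = y \<and> x \<noteq> TE))"

text \<open>The grid edge of [\<alpha>',\<beta>'] incident to \<alpha>' is [\<alpha>',\<alpha>'+1] (it exists iff \<alpha>' < \<beta>'),
  and the one incident to \<beta>' is [\<beta>'-1,\<beta>'].\<close>

fun coh_left :: "tint \<Rightarrow> tint \<Rightarrow> bool" where
  "coh_left ((x, \<alpha>), (y, \<beta>)) ((x', \<alpha>'), (y', \<beta>')) \<longleftrightarrow>
     (\<alpha> < \<alpha>' \<and> \<alpha>' < \<beta>) \<or>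
     (x' = TE \<and> \<alpha>' < \<beta>' \<and> \<alpha> \<le> \<alpha>' \<and> \<alpha>' + 1 \<le> \<beta>) \<or>
     (x' \<noteq> TE \<and> ((x', \<alpha>') = (x, \<alpha>) \<or> (x', \<alpha>') = (y, \<beta>)))"

fun coh_right :: "tint \<Rightarrow> tint \<Rightarrow> bool" where
  "coh_right ((x, \<alpha>), (y, \<beta>)) ((x', \<alpha>'), (y', \<beta>')) \<longleftrightarrow>
     (\<alpha> < \<beta>' \<and> \<beta>' < \<beta>) \<or>
     (y' = TE \<and> \<alpha>' < \<beta>' \<and> \<alpha> \<le> \<beta>' - 1 \<and> \<beta>' \<le> \<beta>) \<or>
     (y' \<noteq> TE \<and> ((y', \<beta>') = (x, \<alpha>) \<or> (y', \<beta>') = (y, \<beta>)))"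

fun tcontains :: "tint \<Rightarrow> tint \<Rightarrow> bool" where
  "tcontains ((x, \<alpha>), (y, \<beta>)) ((x', \<alpha>'), (y', \<beta>')) \<longleftrightarrow>
     \<alpha> \<le> \<alpha>' \<and> \<beta>' \<le> \<beta> \<and>
     coh_left ((x, \<alpha>), (y, \<beta>)) ((x', \<alpha>'), (y', \<beta>')) \<and>
     coh_right ((x, \<alpha>), (y, \<beta>)) ((x', \<alpha>'), (y', \<beta>'))"

fun tintersects :: "tint \<Rightarrow> tint \<Rightarrow> bool" where
  "tintersects ((x, \<alpha>), (y, \<beta>)) ((x', \<alpha>'), (y', \<beta>')) \<longleftrightarrow>
     max \<alpha> \<alpha>' + 1 \<le> min \<beta> \<beta>' \<or>
     coh_left ((x, \<alpha>), (y, \<beta>)) ((x', \<alpha>'), (y', \<beta>')) \<or>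
     coh_right ((x, \<alpha>), (y, \<beta>)) ((x', \<alpha>'), (y', \<beta>')) \<or>
     coh_left ((x', \<alpha>'), (y', \<beta>')) ((x, \<alpha>), (y, \<beta>)) \<or>
     coh_right ((x', \<alpha>'), (y', \<beta>')) ((x, \<alpha>), (y, \<beta>))"

text \<open>Type of a bend at a point of row a, where q is the other end of the vertical segment
  leaving that point: u if the path goes upwards, d if downwards.\<close>

definition bend_ty :: "int \<Rightarrow> point \<Rightarrow> ty" where
  "bend_ty a q = (if snd q > a then TU else TD)"

definition mk_ti :: "ty \<times> int \<Rightarrow> ty \<times> int \<Rightarrow> tint" where
  "mk_ti e1 e2 = (if snd e1 \<le> snd e2 then (e1, e2) else (e2, e1))"

definition hseg_on :: "int \<Rightarrow> point \<Rightarrow> point \<Rightarrow> bool" where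
  "hseg_on a p q \<longleftrightarrow> snd p = a \<and> snd q = a \<and> fst p \<noteq> fst q"

text \<open>The t-projection of a path on row a (meaningful when a is in the index of the path).\<close>

fun tproj_path :: "path2 \<Rightarrow> int \<Rightarrow> tint" where
  "tproj_path (Path p0 p1 p2 p3) a =
     (if hseg_on a p0 p1 then mk_ti (TE, fst p0) (bend_ty a p2, fst p1)
      else if hseg_on a p1 p2 then mk_ti (bend_ty a p0, fst p1) (bend_ty a p3, fst p2)
      else mk_ti (bend_ty a p1, fst p2) (TE, fst p3))"

definition tproj :: "('v \<Rightarrow> path2) \<Rightarrow> 'v \<Rightarrow> int \<Rightarrow> tint" where
  "tproj P u a = tproj_path (P u) a"

definition proj_clique :: "('v \<Rightarrow> path2) \<Rightarrow> 'v set \<Rightarrow> int \<Rightarrow> bool" where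
  "proj_clique P Y a \<longleftrightarrow>
     (\<forall>u\<in>Y. \<forall>v\<in>Y. u \<noteq> v \<longrightarrow> tintersects (tproj P u a) (tproj P v a))"

end

theory Submission
  imports Defs
begin

text \<open>Each vertex of Y has a t-projection on row a with one free end and one bend towards row b.
  A vertex u sharing no row but a with such a vertex y meets it in a grid edge iff their
  t-projections intersect: a common edge of row a, or a common bend endpoint of the same type,
  which gives a common vertical edge. As the projections of Y are not pairwise intersecting, the
  earliest right end r of a projection lies weakly left of the latest left end l, and an interval
  meets all projections iff it reaches from r to l, the types at r and l deciding whether touching
  r or l exactly suffices. This is containment of the typed interval t from r to l.\<close>

lemma HE_in_seg_edges [simp]:
  "HE x z \<in> seg_edges p q \<longleftrightarrow>
     snd p = snd q \<and> z = snd p \<and> min (fst p) (fst q) \<le> x \<and> x < max (fst p) (fst q)"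
  by (auto simp: seg_edges_def)

lemma VE_in_seg_edges [simp]:
  "VE x z \<in> seg_edges p q \<longleftrightarrow>
     snd p \<noteq> snd q \<and> fst p = fst q \<and> x = fst p \<and> min (snd p) (snd q) \<le> z \<and> z < max (snd p) (snd q)"
  by (auto simp: seg_edges_def)

definition path_rows :: "path2 \<Rightarrow> int set" where
  "path_rows w = {a. \<exists>x. HE x a \<in> pedges w}"

lemma index_eq_path_rows: "index P u = path_rows (P u)"
  by (simp add: index_def path_rows_def)

lemma valid_path_cases:
  assumes "valid_path w"
  obtains (HVH) x0 x1 x3 y z where
      "w = Path (x0,y) (x1,y) (x1,z) (x3,z)" "x0 \<noteq> x1" "y \<noteq> z" "x1 \<noteq> x3"
  | (VHV) x0 x2 y0 y1 y3 where
      "w = Path (x0,y0) (x0,y1) (x2,y1) (x2,y3)" "y0 \<noteq> y1" "x0 \<noteq> x2" "y3 \<noteq> y1"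
proof -
  obtain x0 y0 x1 y1 x2 y2 x3 y3 where "w = Path (x0,y0) (x1,y1) (x2,y2) (x3,y3)"
    by (metis path2.exhaust surj_pair)
  with assms that show thesis by (auto simp: horiz_def vert_def)
qed

lemma path_rows_HVH:
  "x0 \<noteq> x1 \<Longrightarrow> x1 \<noteq> x3 \<Longrightarrow> path_rows (Path (x0,y) (x1,y) (x1,z) (x3,z)) = {y, z}"
  unfolding path_rows_def by (rule set_eqI) (auto intro: exI[of _ "min x0 x1"] exI[of _ "min x1 x3"])

lemma path_rows_VHV:
  "x0 \<noteq> x2 \<Longrightarrow> y0 \<noteq> y1 \<Longrightarrow> y3 \<noteq> y1 \<Longrightarrow> path_rows (Path (x0,y0) (x0,y1) (x2,y1) (x2,y3)) = {y1}"
  unfolding path_rows_def by (rule set_eqI) (auto intro: exI[of _ "min x0 x2"])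

text \<open>The t-projection on row a determines the grid edges of w touching row a; VE x a and
  VE x (a - 1) are the vertical edges leaving row a at column x upwards and downwards.\<close>

definition tproj_exact :: "path2 \<Rightarrow> int \<Rightarrow> bool" where
  "tproj_exact w a \<longleftrightarrow> (case tproj_path w a of ((x1, p), (x2, q)) \<Rightarrow>
     p < q \<and>
     (\<forall>x. HE x a \<in> pedges w \<longleftrightarrow> p \<le> x \<and> x < q) \<and>
     (\<forall>x y. VE x y \<in> pedges w \<longrightarrow>
        (\<exists>T. (T, x) \<in> {(x1, p), (x2, q)} \<and> T \<noteq> TE \<and> (a \<le> y \<longleftrightarrow> T = TU))) \<and>
     (\<forall>T x. (T, x) \<in> {(x1, p), (x2, q)} \<and> T \<noteq> TE \<longrightarrow>
        VE x (if T = TU then a else a - 1) \<in> pedges w))"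

lemma tproj_exactD:
  assumes "tproj_exact w a" "tproj_path w a = ((x1, p), (x2, q))"
  shows "p < q"
    and "HE x a \<in> pedges w \<longleftrightarrow> p \<le> x \<and> x < q"
    and "VE x y \<in> pedges w \<Longrightarrow> \<exists>T. (T, x) \<in> {(x1, p), (x2, q)} \<and> T \<noteq> TE \<and> (a \<le> y \<longleftrightarrow> T = TU)"
    and "(T, x) \<in> {(x1, p), (x2, q)} \<Longrightarrow> T \<noteq> TE \<Longrightarrow> VE x (if T = TU then a else a - 1) \<in> pedges w"
  using assms unfolding tproj_exact_def by (simp_all only: prod.case) blast+

lemma tproj_exact_on_row:
  assumes "valid_path w" "a \<in> path_rows w"
  shows "tproj_exact w a"
  using assms(1)
proof (cases rule: valid_path_cases)
  case (HVH x0 x1 x3 y z)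
  with assms(2) have "a = y \<or> a = z" by (simp add: path_rows_HVH)
  with HVH show ?thesis
    by (auto simp: tproj_exact_def mk_ti_def bend_ty_def hseg_on_def)
next
  case (VHV x0 x2 y0 y1 y3)
  with assms(2) have "a = y1" by (simp add: path_rows_VHV)
  with VHV show ?thesis
    by (auto simp: tproj_exact_def mk_ti_def bend_ty_def hseg_on_def)
qed

lemma tintersects_iff:
  assumes "p1 < q1" "p2 < q2"
  shows "tintersects ((x1,p1),(z1,q1)) ((x2,p2),(z2,q2)) \<longleftrightarrow>
    max p1 p2 + 1 \<le> min q1 q2 \<or>
    (\<exists>T x. (T,x) \<in> {(x1,p1),(z1,q1)} \<and> (T,x) \<in> {(x2,p2),(z2,q2)} \<and> T \<noteq> TE)"
  using assms by auto

lemma bend_ty_eqI: "T1 \<noteq> TE \<Longrightarrow> T2 \<noteq> TE \<Longrightarrow> (T1 = TU \<longleftrightarrow> T2 = TU) \<Longrightarrow> T1 = T2"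
  by (cases T1; cases T2) auto

lemma edges_meet_iff_tintersects:
  assumes ex1: "tproj_exact w1 a" and ex2: "tproj_exact w2 a"
    and rows: "path_rows w1 \<inter> path_rows w2 \<subseteq> {a}"
  shows "pedges w1 \<inter> pedges w2 \<noteq> {} \<longleftrightarrow> tintersects (tproj_path w1 a) (tproj_path w2 a)"
proof -
  obtain x1 p1 z1 q1 where t1: "tproj_path w1 a = ((x1,p1),(z1,q1))" by (metis prod.collapse)
  obtain x2 p2 z2 q2 where t2: "tproj_path w2 a = ((x2,p2),(z2,q2))" by (metis prod.collapse)
  note w1 = tproj_exactD[OF ex1 t1] and w2 = tproj_exactD[OF ex2 t2]
  have "pedges w1 \<inter> pedges w2 \<noteq> {} \<longleftrightarrow> max p1 p2 + 1 \<le> min q1 q2 \<or>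
      (\<exists>T x. (T,x) \<in> {(x1,p1),(z1,q1)} \<and> (T,x) \<in> {(x2,p2),(z2,q2)} \<and> T \<noteq> TE)"
    (is "_ \<longleftrightarrow> ?row_edge \<or> ?bend")
  proof
    assume "pedges w1 \<inter> pedges w2 \<noteq> {}"
    then obtain g where g: "g \<in> pedges w1" "g \<in> pedges w2" by blast
    show "?row_edge \<or> ?bend"
    proof (cases g)
      case (HE x z)
      with g rows have "z = a" by (auto simp: path_rows_def)
      with g HE w1(2) w2(2) show ?thesis by auto
    next
      case (VE x y)
      then obtain T1 T2 where T: "(T1,x) \<in> {(x1,p1),(z1,q1)}" "(T2,x) \<in> {(x2,p2),(z2,q2)}"
        "T1 \<noteq> TE" "T2 \<noteq> TE" "T1 = TU \<longleftrightarrow> T2 = TU"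
        using w1(3) w2(3) g by metis
      then have "T1 = T2" by (intro bend_ty_eqI)
      with T show ?thesis by blast
    qed
  next
    assume "?row_edge \<or> ?bend"
    then show "pedges w1 \<inter> pedges w2 \<noteq> {}"
    proof
      assume ?row_edge
      then have "HE (max p1 p2) a \<in> pedges w1 \<inter> pedges w2" using w1(2) w2(2) by auto
      then show ?thesis by blast
    next
      assume ?bend
      then show ?thesis using w1(4) w2(4) by blast
    qed
  qed
  then show ?thesis unfolding t1 t2 by (simp only: tintersects_iff w1(1) w2(1))
qed

lemma adj_iff_tintersects_tproj:
  assumes rep: "B2_rep V adj P" and "u \<in> V" "v \<in> V" "u \<noteq> v"
    and rows: "index P u \<inter> index P v = {a}"
  shows "adj u v \<longleftrightarrow> tintersects (tproj P u a) (tproj P v a)"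
proof -
  have valid: "valid_path (P u)" "valid_path (P v)"
    using rep \<open>u \<in> V\<close> \<open>v \<in> V\<close> unfolding B2_rep_def by blast+
  have "adj u v \<longleftrightarrow> pedges (P u) \<inter> pedges (P v) \<noteq> {}"
    using rep \<open>u \<in> V\<close> \<open>v \<in> V\<close> \<open>u \<noteq> v\<close> unfolding B2_rep_def by blast
  also have "\<dots> \<longleftrightarrow> tintersects (tproj P u a) (tproj P v a)"
    unfolding tproj_def
    using rows valid by (intro edges_meet_iff_tintersects tproj_exact_on_row) (auto simp: index_eq_path_rows)
  finally show ?thesis .
qed

text \<open>The shape of the t-projection on row a of a path with index {a, b}, where D is the
  type of a bend towards row b.\<close>

fun one_bend :: "ty \<Rightarrow> tint \<Rightarrow> bool" where
  "one_bend D ((c1, \<alpha>), (c2, \<beta>)) \<longleftrightarrow> \<alpha> < \<beta> \<and> (c1 = TE \<and> c2 = D \<or> c1 = D \<and> c2 = TE)"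

lemma one_bend_tproj:
  assumes "valid_path w" "path_rows w = {a, b}" "a \<noteq> b"
  shows "one_bend (if a < b then TU else TD) (tproj_path w a)"
  using assms(1)
proof (cases rule: valid_path_cases)
  case (HVH x0 x1 x3 y z)
  with assms(2) have "{y, z} = {a, b}" by (simp add: path_rows_HVH)
  with assms(3) have "a = y \<and> b = z \<or> a = z \<and> b = y" by (auto simp: doubleton_eq_iff)
  with HVH show ?thesis by (auto simp: mk_ti_def bend_ty_def hseg_on_def)
next
  case (VHV x0 x2 y0 y1 y3)
  with assms(2) have "{y1} = {a, b}" by (simp add: path_rows_VHV)
  with assms(3) show ?thesis by auto
qed

text \<open>A free end at r is met only through the grid edge [r - 1, r], a bend end at r
  through the typed point itself.\<close>

fun sep_start :: "ty \<times> int \<Rightarrow> ty \<times> int" where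
  "sep_start (T, r) = (if T = TE then (TE, r - 1) else (T, r))"

fun sep_end :: "ty \<times> int \<Rightarrow> ty \<times> int" where
  "sep_end (T, l) = (if T = TE then (TE, l + 1) else (T, l))"

fun starts_before :: "tint \<Rightarrow> ty \<times> int \<Rightarrow> bool" where
  "starts_before ((x, p), _) (T, r) \<longleftrightarrow> p < r \<or> (T \<noteq> TE \<and> p = r \<and> x = T)"

fun ends_after :: "tint \<Rightarrow> ty \<times> int \<Rightarrow> bool" where
  "ends_after (_, (z, q)) (T, l) \<longleftrightarrow> l < q \<or> (T \<noteq> TE \<and> q = l \<and> z = T)"

lemma tintersects_if_common_edge:
  "max \<alpha> \<alpha>' + 1 \<le> min \<beta> \<beta>' \<Longrightarrow> tintersects ((x, \<alpha>), (y, \<beta>)) ((x', \<alpha>'), (y', \<beta>'))"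
  by simp

lemma tcontains_sep_iff:
  assumes "r \<le> l" "T \<in> {TE, D}" "T' \<in> {TE, D}" "p < q"
  shows "tcontains ((x, p), (z, q)) (sep_start (T, r), sep_end (T', l)) \<longleftrightarrow>
    starts_before ((x, p), (z, q)) (T, r) \<and> ends_after ((x, p), (z, q)) (T', l)"
  using assms by auto

lemma proper_sep:
  assumes "r \<le> l" "T \<in> {TE, D}" "T' \<in> {TE, D}"
  shows "proper (sep_start (T, r), sep_end (T', l))"
  using assms by auto

lemma starts_before_if_tintersects:
  assumes "tintersects ((x, p), (z, q)) ((c, \<alpha>), (T, r))" "\<alpha> < r" "p < q" "r \<le> q"
  shows "starts_before ((x, p), (z, q)) (T, r)"
  using assms by (auto simp: tintersects_iff)

lemma ends_after_if_tintersects: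
  assumes "tintersects ((x, p), (z, q)) ((T, l), (c, \<beta>))" "l < \<beta>" "p < q" "p \<le> l"
  shows "ends_after ((x, p), (z, q)) (T, l)"
  using assms by (auto simp: tintersects_iff)

lemma starts_before_ends_after_if_tintersects:
  assumes r: "tintersects ((x, p), (z, q)) ((c, \<alpha>), (T, r))" "\<alpha> < r"
    and l: "tintersects ((x, p), (z, q)) ((T', l), (c', \<beta>))" "l < \<beta>"
    and "r \<le> l" "p < q"
  shows "starts_before ((x, p), (z, q)) (T, r) \<and> ends_after ((x, p), (z, q)) (T', l)"
proof -
  have "p \<le> r" using r \<open>p < q\<close> by (auto simp: tintersects_iff)
  moreover have "l \<le> q" using l \<open>p < q\<close> by (auto simp: tintersects_iff)
  ultimately show ?thesis using starts_before_if_tintersects[OF r] ends_after_if_tintersects[OF l]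
    \<open>r \<le> l\<close> \<open>p < q\<close> by simp
qed

lemma tintersects_if_starts_before_ends_after:
  assumes s: "one_bend D ((c1, \<alpha>), (c2, \<beta>))" "T \<in> {TE, D}" "T' \<in> {TE, D}"
    and r: "r \<le> \<beta>" "\<beta> = r \<Longrightarrow> c2 = TE \<Longrightarrow> T = TE"
    and l: "\<alpha> \<le> l" "\<alpha> = l \<Longrightarrow> c1 = TE \<Longrightarrow> T' = TE"
    and "r \<le> l" "p < q"
    and u: "starts_before ((x, p), (z, q)) (T, r)" "ends_after ((x, p), (z, q)) (T', l)"
  shows "tintersects ((x, p), (z, q)) ((c1, \<alpha>), (c2, \<beta>))"
proof -
  have "p \<le> r" "l \<le> q" using u by auto
  then consider "p < \<beta> \<and> \<alpha> < q" | "p = \<beta>" "\<beta> = r" | "q = \<alpha>" "\<alpha> = l"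
    using r(1) l(1) by linarith
  then show ?thesis
  proof cases
    case 1
    then have "max p \<alpha> + 1 \<le> min q \<beta>" using s(1) \<open>p < q\<close> by auto
    then show ?thesis by (rule tintersects_if_common_edge)
  next
    case 2
    then have "T \<noteq> TE" "x = T" using u(1) by auto
    then have "(x, p) = (c2, \<beta>)" using s r(2) 2 by auto
    with \<open>T \<noteq> TE\<close> \<open>x = T\<close> show ?thesis using s(1) \<open>p < q\<close> by (auto simp: tintersects_iff)
  next
    case 3
    then have "T' \<noteq> TE" "z = T'" using u(2) by auto
    then have "(z, q) = (c1, \<alpha>)" using s l(2) 3 by auto
    with \<open>T' \<noteq> TE\<close> \<open>z = T'\<close> show ?thesis using s(1) \<open>p < q\<close> by (auto simp: tintersects_iff)
  qed
qed

lemma tintersects_sep: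
  assumes s: "one_bend D ((c1, \<alpha>), (c2, \<beta>))" "T \<in> {TE, D}" "T' \<in> {TE, D}"
    and r: "r \<le> \<beta>" "\<beta> = r \<Longrightarrow> c2 = TE \<Longrightarrow> T = TE"
    and l: "\<alpha> \<le> l" "\<alpha> = l \<Longrightarrow> c1 = TE \<Longrightarrow> T' = TE"
    and "r \<le> l"
  shows "tintersects ((c1, \<alpha>), (c2, \<beta>)) (sep_start (T, r), sep_end (T', l))"
proof -
  obtain X \<rho> Y \<sigma> where t: "sep_start (T, r) = (X, \<rho>)" "sep_end (T', l) = (Y, \<sigma>)"
    by (metis surj_pair)
  have "\<rho> + 1 \<le> \<beta> \<or> (X, \<rho>) = (c2, \<beta>) \<and> X \<noteq> TE"
    using s r t by (cases "\<beta> = r") (auto split: if_splits)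
  moreover have "\<alpha> + 1 \<le> \<sigma> \<or> (Y, \<sigma>) = (c1, \<alpha>) \<and> Y \<noteq> TE"
    using s l t by (cases "\<alpha> = l") (auto split: if_splits)
  moreover have "\<rho> \<le> \<sigma>"
    using t \<open>r \<le> l\<close> by (auto split: if_splits)
  ultimately consider "(X, \<rho>) = (c2, \<beta>)" "X \<noteq> TE" | "(Y, \<sigma>) = (c1, \<alpha>)" "Y \<noteq> TE"
    | "\<rho> + 1 \<le> \<beta>" "\<alpha> + 1 \<le> \<sigma>" "\<rho> \<le> \<sigma>"
    by blast
  then show ?thesis
  proof cases
    case 1
    then show ?thesis unfolding t by simp
  next
    case 2
    then show ?thesis unfolding t by simp
  next
    case 3
    then show ?thesis
    proof (cases "\<rho> < \<sigma>")
      case True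
      with 3 s(1) have "max \<alpha> \<rho> + 1 \<le> min \<beta> \<sigma>" by auto
      then show ?thesis unfolding t by (rule tintersects_if_common_edge)
    next
      case False
      with 3 s(1) show ?thesis unfolding t by auto
    qed
  qed
qed

text \<open>Among the right ends at the minimal position a free end is preferred, being the harder
  one to meet.\<close>

definition first_end :: "ty \<Rightarrow> tint set \<Rightarrow> ty \<times> int" where
  "first_end D S =
     (let r = Min ((snd \<circ> snd) ` S) in (if (TE, r) \<in> snd ` S then TE else D, r))"

definition last_start :: "ty \<Rightarrow> tint set \<Rightarrow> ty \<times> int" where
  "last_start D S =
     (let l = Max ((snd \<circ> fst) ` S) in (if (TE, l) \<in> fst ` S then TE else D, l))"

definition separator :: "ty \<Rightarrow> tint set \<Rightarrow> tint" where
  "separator D S = (sep_start (first_end D S), sep_end (last_start D S))"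

locale one_bend_family =
  fixes D :: ty and S :: "tint set"
  assumes finite_S: "finite S"
    and D_bend: "D \<noteq> TE"
    and S_one_bend: "\<And>s. s \<in> S \<Longrightarrow> one_bend D s"
    and not_clique: "\<exists>s1\<in>S. \<exists>s2\<in>S. \<not> tintersects s1 s2"
begin

lemma first_end_type: "fst (first_end D S) \<in> {TE, D}"
  by (simp add: first_end_def Let_def)

lemma last_start_type: "fst (last_start D S) \<in> {TE, D}"
  by (simp add: last_start_def Let_def)

lemma snd_first_end: "snd (first_end D S) = Min ((snd \<circ> snd) ` S)"
  by (simp add: first_end_def Let_def)

lemma fst_first_end: "fst (first_end D S) = TE \<longleftrightarrow> (TE, snd (first_end D S)) \<in> snd ` S"
  using D_bend by (simp add: first_end_def Let_def)

lemma snd_last_start: "snd (last_start D S) = Max ((snd \<circ> fst) ` S)"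
  by (simp add: last_start_def Let_def)

lemma fst_last_start: "fst (last_start D S) = TE \<longleftrightarrow> (TE, snd (last_start D S)) \<in> fst ` S"
  using D_bend by (simp add: last_start_def Let_def)

lemma first_end_le:
  assumes "first_end D S = (T, r)" "((c1, \<alpha>), (c2, \<beta>)) \<in> S"
  shows "r \<le> \<beta>" and "\<beta> = r \<Longrightarrow> c2 = TE \<Longrightarrow> T = TE"
proof -
  have "\<beta> \<in> (snd \<circ> snd) ` S" using assms(2) by (rule image_eqI[rotated]) simp
  then show "r \<le> \<beta>" using snd_first_end finite_S assms(1) by simp
  show "T = TE" if "\<beta> = r" "c2 = TE"
    using fst_first_end assms that by force
qed

lemma last_start_ge:
  assumes "last_start D S = (T, l)" "((c1, \<alpha>), (c2, \<beta>)) \<in> S"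
  shows "\<alpha> \<le> l" and "\<alpha> = l \<Longrightarrow> c1 = TE \<Longrightarrow> T = TE"
proof -
  have "\<alpha> \<in> (snd \<circ> fst) ` S" using assms(2) by (rule image_eqI[rotated]) simp
  then show "\<alpha> \<le> l" using snd_last_start finite_S assms(1) by simp
  show "T = TE" if "\<alpha> = l" "c1 = TE"
    using fst_last_start assms that by force
qed

lemma first_end_in: "\<exists>s\<in>S. snd s = first_end D S"
proof -
  let ?r = "snd (first_end D S)"
  have "S \<noteq> {}" using not_clique by blast
  then have "?r \<in> (snd \<circ> snd) ` S" unfolding snd_first_end using finite_S by (intro Min_in) auto
  then obtain c1 \<alpha> c2 where s: "((c1, \<alpha>), (c2, ?r)) \<in> S" by force
  show ?thesis
  proof (cases "fst (first_end D S) = TE")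
    case True
    then have "first_end D S = (TE, ?r)" by (simp add: prod_eq_iff)
    moreover have "(TE, ?r) \<in> snd ` S" using True fst_first_end by blast
    ultimately show ?thesis by force
  next
    case False
    with s have "c2 \<noteq> TE" unfolding fst_first_end by force
    with S_one_bend[OF s] have "c2 = D" by simp
    moreover have "first_end D S = (D, ?r)" using False first_end_type by (simp add: prod_eq_iff)
    ultimately show ?thesis using s by force
  qed
qed

lemma last_start_in: "\<exists>s\<in>S. fst s = last_start D S"
proof -
  let ?l = "snd (last_start D S)"
  have "S \<noteq> {}" using not_clique by blast
  then have "?l \<in> (snd \<circ> fst) ` S" unfolding snd_last_start using finite_S by (intro Max_in) auto
  then obtain c1 c2 \<beta> where s: "((c1, ?l), (c2, \<beta>)) \<in> S" by force
  show ?thesis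
  proof (cases "fst (last_start D S) = TE")
    case True
    then have "last_start D S = (TE, ?l)" by (simp add: prod_eq_iff)
    moreover have "(TE, ?l) \<in> fst ` S" using True fst_last_start by blast
    ultimately show ?thesis by force
  next
    case False
    with s have "c1 \<noteq> TE" unfolding fst_last_start by force
    with S_one_bend[OF s] have "c1 = D" by simp
    moreover have "last_start D S = (D, ?l)" using False last_start_type by (simp add: prod_eq_iff)
    ultimately show ?thesis using s by force
  qed
qed

lemma first_end_le_last_start: "snd (first_end D S) \<le> snd (last_start D S)"
proof -
  obtain c1 \<alpha> c2 \<beta> d1 \<gamma> d2 \<delta> where
    s: "((c1, \<alpha>), (c2, \<beta>)) \<in> S" "((d1, \<gamma>), (d2, \<delta>)) \<in> S"
    and disjoint: "\<not> tintersects ((c1, \<alpha>), (c2, \<beta>)) ((d1, \<gamma>), (d2, \<delta>))"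
    using not_clique by (metis prod.collapse)
  have "\<alpha> < \<beta>" "\<gamma> < \<delta>" using S_one_bend[OF s(1)] S_one_bend[OF s(2)] by auto
  moreover have "\<not> max \<alpha> \<gamma> + 1 \<le> min \<beta> \<delta>" using disjoint tintersects_if_common_edge by blast
  ultimately have "\<beta> \<le> \<gamma> \<or> \<delta> \<le> \<alpha>" by linarith
  moreover obtain T r T' l where ends: "first_end D S = (T, r)" "last_start D S = (T', l)"
    by (metis prod.collapse)
  ultimately have "r \<le> l"
    using first_end_le(1)[OF ends(1) s(1)] first_end_le(1)[OF ends(1) s(2)]
      last_start_ge(1)[OF ends(2) s(1)] last_start_ge(1)[OF ends(2) s(2)] by linarith
  then show ?thesis using ends by simp
qed

lemma proper_separator: "proper (separator D S)"
  using proper_sep[OF first_end_le_last_start first_end_type last_start_type]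
  by (simp add: separator_def)

lemma tintersects_separator:
  assumes "s \<in> S"
  shows "tintersects s (separator D S)"
proof -
  obtain c1 \<alpha> c2 \<beta> where s: "s = ((c1, \<alpha>), (c2, \<beta>))" by (metis prod.collapse)
  obtain T r T' l where ends: "first_end D S = (T, r)" "last_start D S = (T', l)"
    by (metis prod.collapse)
  note s_in = assms[unfolded s]
  have "T \<in> {TE, D}" "T' \<in> {TE, D}" "r \<le> l"
    using first_end_type last_start_type first_end_le_last_start by (simp_all add: ends)
  with tintersects_sep[OF S_one_bend[OF s_in] _ _
      first_end_le(1)[OF ends(1) s_in] first_end_le(2)[OF ends(1) s_in]
      last_start_ge(1)[OF ends(2) s_in] last_start_ge(2)[OF ends(2) s_in]]
  show ?thesis unfolding s separator_def ends by blast
qed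

lemma tintersects_all_iff_tcontains_separator:
  assumes "p < q"
  shows "(\<forall>s\<in>S. tintersects ((x, p), (z, q)) s) \<longleftrightarrow> tcontains ((x, p), (z, q)) (separator D S)"
proof -
  let ?u = "((x, p), (z, q))"
  obtain T r T' l where ends: "first_end D S = (T, r)" "last_start D S = (T', l)"
    by (metis prod.collapse)
  have types: "T \<in> {TE, D}" "T' \<in> {TE, D}" and "r \<le> l"
    using first_end_type last_start_type first_end_le_last_start by (simp_all add: ends)
  have "(\<forall>s\<in>S. tintersects ?u s) \<longleftrightarrow> starts_before ?u (T, r) \<and> ends_after ?u (T', l)"
  proof
    assume all: "\<forall>s\<in>S. tintersects ?u s"
    obtain c \<alpha> where sr: "((c, \<alpha>), (T, r)) \<in> S"
      using first_end_in ends(1) by (metis prod.collapse)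
    obtain c' \<beta> where sl: "((T', l), (c', \<beta>)) \<in> S"
      using last_start_in ends(2) by (metis prod.collapse)
    have "\<alpha> < r" "l < \<beta>" using S_one_bend[OF sr] S_one_bend[OF sl] by auto
    moreover have "tintersects ?u ((c, \<alpha>), (T, r))" "tintersects ?u ((T', l), (c', \<beta>))"
      using all sr sl by blast+
    ultimately show "starts_before ?u (T, r) \<and> ends_after ?u (T', l)"
      using starts_before_ends_after_if_tintersects \<open>r \<le> l\<close> \<open>p < q\<close> by blast
  next
    assume reach: "starts_before ?u (T, r) \<and> ends_after ?u (T', l)"
    show "\<forall>s\<in>S. tintersects ?u s"
    proof
      fix s assume "s \<in> S"
      moreover obtain c1 \<alpha> c2 \<beta> where s: "s = ((c1, \<alpha>), (c2, \<beta>))" by (metis prod.collapse)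
      ultimately have s_in: "((c1, \<alpha>), (c2, \<beta>)) \<in> S" by simp
      show "tintersects ?u s" unfolding s
        using tintersects_if_starts_before_ends_after[OF S_one_bend[OF s_in] types
            first_end_le(1)[OF ends(1) s_in] first_end_le(2)[OF ends(1) s_in]
            last_start_ge(1)[OF ends(2) s_in] last_start_ge(2)[OF ends(2) s_in]]
          \<open>r \<le> l\<close> \<open>p < q\<close> reach by blast
    qed
  qed
  also have "\<dots> \<longleftrightarrow> tcontains ?u (separator D S)"
    unfolding separator_def ends using tcontains_sep_iff[OF \<open>r \<le> l\<close> types \<open>p < q\<close>] by simp
  finally show ?thesis .
qed

end

lemma one_bend_family_tproj:
  assumes "finite V" "\<And>v. v \<in> V \<Longrightarrow> valid_path (P v)" "a \<noteq> b" "Y \<subseteq> V"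
    and "\<forall>y\<in>Y. index P y = {a, b}" "\<not> proj_clique P Y a"
  shows "one_bend_family (if a < b then TU else TD) ((\<lambda>y. tproj P y a) ` Y)"
proof
  show "finite ((\<lambda>y. tproj P y a) ` Y)" using assms(1,4) finite_subset by blast
  show "\<exists>s1\<in>(\<lambda>y. tproj P y a) ` Y. \<exists>s2\<in>(\<lambda>y. tproj P y a) ` Y. \<not> tintersects s1 s2"
    using assms(6) unfolding proj_clique_def by blast
  show "one_bend (if a < b then TU else TD) s" if "s \<in> (\<lambda>y. tproj P y a) ` Y" for s
  proof -
    from that obtain y where "y \<in> Y" "s = tproj P y a" by blast
    with assms(2-5) show ?thesis
      unfolding tproj_def by (metis index_eq_path_rows one_bend_tproj subsetD)
  qed
qed simp

theorem lemma5:
  fixes V :: "'v set" and adj :: "'v \<Rightarrow> 'v \<Rightarrow> bool" and P :: "'v \<Rightarrow> path2"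
    and a b :: int and Y :: "'v set"
  assumes "finite V"
    and "B2_rep V adj P"
    and "a \<noteq> b"
    and "Y \<subseteq> V"
    and "\<forall>y\<in>Y. index P y = {a, b}"
    and "\<not> proj_clique P Y a"
  shows "\<exists>t. proper t \<and>
           (\<forall>y\<in>Y. tintersects (tproj P y a) t) \<and>
           (\<forall>u\<in>V. (index P u = {a} \<or> (\<exists>c. c \<noteq> a \<and> c \<noteq> b \<and> index P u = {a, c})) \<longrightarrow>
                   ((\<forall>y\<in>Y. adj u y) \<longleftrightarrow> tcontains (tproj P u a) t))"
proof -
  have valid: "\<And>v. v \<in> V \<Longrightarrow> valid_path (P v)" using assms(2) by (simp add: B2_rep_def)
  define D where "D = (if a < b then TU else TD)"
  define S where "S = (\<lambda>y. tproj P y a) ` Y"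
  interpret one_bend_family D S
    unfolding D_def S_def by (rule one_bend_family_tproj[OF assms(1) valid assms(3-6)])
  show ?thesis
  proof (intro exI conjI ballI impI)
    show "proper (separator D S)" by (rule proper_separator)
    show "tintersects (tproj P y a) (separator D S)" if "y \<in> Y" for y
      using that by (intro tintersects_separator) (simp add: S_def)
  next
    fix u assume "u \<in> V" and u_rows: "index P u = {a} \<or> (\<exists>c. c \<noteq> a \<and> c \<noteq> b \<and> index P u = {a, c})"
    obtain x p z q where tu: "tproj P u a = ((x, p), (z, q))" by (metis prod.collapse)
    have "a \<in> path_rows (P u)" using u_rows by (auto simp: index_eq_path_rows[symmetric])
    then have "p < q"
      using tproj_exactD(1)[OF tproj_exact_on_row[OF valid[OF \<open>u \<in> V\<close>]]] tu
      by (simp add: tproj_def)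
    have "adj u y \<longleftrightarrow> tintersects (tproj P u a) (tproj P y a)" if "y \<in> Y" for y
      using that u_rows assms(3-5) \<open>u \<in> V\<close>
      by (intro adj_iff_tintersects_tproj[OF assms(2)]) auto
    then have "(\<forall>y\<in>Y. adj u y) \<longleftrightarrow> (\<forall>s\<in>S. tintersects (tproj P u a) s)"
      by (simp add: S_def)
    also have "\<dots> \<longleftrightarrow> tcontains (tproj P u a) (separator D S)"
      unfolding tu by (rule tintersects_all_iff_tcontains_separator[OF \<open>p < q\<close>])
    finally show "(\<forall>y\<in>Y. adj u y) \<longleftrightarrow> tcontains (tproj P u a) (separator D S)" .
  qed
qed

end
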